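(* Let $K$ be an algebraically closed field of characteristic zero, $\mathcal{K}=K(t)$, $\alpha \in \mathcal{K}$, and $M \ge 0$. Let \[\phi_1(z) = -\frac{t(z+1)}{z-(t-1)}.\] Then $\alpha$ fails to realize portrait $(M,1)$ for $f_2(z) = z^2+t$ if and only if $M = 1$ and $\alpha \in \mathcal{O}_{\phi_1}(0)\cup\mathcal{O}_{\phi_1}(\infty)$. Moreover, for each $k\ge0$, $h(\phi_1^k(0)) = h(\phi_1^k(\infty)) = k$.
   Context: $\phi_1$ is viewed as a self-map of $\mathbb{P}^1(\mathcal{K})$ and $\mathcal{O}_{\phi_1}(x) = \{\phi_1^k(x): k\ge0\}$. The height $h$ of an element of $K(t)$ is its degree as a rational function in $t$, with $h(\infty)=0$. For $c \in K$, $f_{2,c}(z) = z^2+c$. A point $x$ has preperiodic portrait $(M,N)$ for $\phi$ if $M\ge0$ is minimal with $\phi^M(x)$ periodic and $\phi^M(x)$ has exact period $N$. We say $\alpha$ realizes portrait $(M,N)$ for $f_2$ if there exists $c \in K$ such that $\alpha(c)$ (reduction modulo the place $t=c$) has portrait $(M,N)$ for $f_{2,c}$. *)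

theory Defs
  imports "HOL-Computational_Algebra.Computational_Algebra"
begin

text \<open>The rational function field K(t) is modelled as 'a poly fract; points of
  P^1 are modelled by the option type, None being the point at infinity.\<close>

type_synonym 'a ratfun = "'a poly fract"

definition tvar :: "'a::field ratfun" where
  "tvar = Fract [:0, 1:] 1"

text \<open>Numerator and denominator in lowest terms (coprime, denominator monic);
  this pair exists and is unique.\<close>
definition rnumden :: "'a::field ratfun \<Rightarrow> 'a poly \<times> 'a poly" where
  "rnumden x = (SOME (p, q). x = Fract p q \<and> lead_coeff q = 1 \<and> coprime p q)"
definition rnum :: "'a::field ratfun \<Rightarrow> 'a poly" where
  "rnum x = fst (rnumden x)"
definition rden :: "'a::field ratfun \<Rightarrow> 'a poly" where
  "rden x = snd (rnumden x)"

definition height :: "'a::field ratfun option \<Rightarrow> nat" where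
  "height x = (case x of None \<Rightarrow> 0
      | Some r \<Rightarrow> max (degree (rnum r)) (degree (rden r)))"

definition reduce_at :: "'a::field ratfun \<Rightarrow> 'a \<Rightarrow> 'a option" where
  "reduce_at x c = (if poly (rden x) c = 0 then None
      else Some (poly (rnum x) c / poly (rden x) c))"

definition phi1 :: "'a::field ratfun option \<Rightarrow> 'a ratfun option" where
  "phi1 x = (case x of None \<Rightarrow> Some (- tvar)
      | Some z \<Rightarrow> (if z = tvar - 1 then None
                  else Some (- tvar * (z + 1) / (z - (tvar - 1)))))"

definition orbit :: "('b \<Rightarrow> 'b) \<Rightarrow> 'b \<Rightarrow> 'b set" where
  "orbit f x = {(f ^^ k) x | k. True}"

definition f2 :: "'a::field \<Rightarrow> 'a option \<Rightarrow> 'a option" where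
  "f2 c x = map_option (\<lambda>z. z ^ 2 + c) x"

definition is_periodic :: "('b \<Rightarrow> 'b) \<Rightarrow> 'b \<Rightarrow> bool" where
  "is_periodic f y \<longleftrightarrow> (\<exists>n>0. (f ^^ n) y = y)"

definition exact_period :: "('b \<Rightarrow> 'b) \<Rightarrow> 'b \<Rightarrow> nat \<Rightarrow> bool" where
  "exact_period f y N \<longleftrightarrow> N > 0 \<and> (f ^^ N) y = y \<and> (\<forall>n. 0 < n \<and> n < N \<longrightarrow> (f ^^ n) y \<noteq> y)"

definition has_portrait :: "('b \<Rightarrow> 'b) \<Rightarrow> 'b \<Rightarrow> nat \<Rightarrow> nat \<Rightarrow> bool" where
  "has_portrait f x M N \<longleftrightarrow>
     is_periodic f ((f ^^ M) x) \<and> (\<forall>m<M. \<not> is_periodic f ((f ^^ m) x)) \<and>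
     exact_period f ((f ^^ M) x) N"

definition realizes :: "'a::field ratfun \<Rightarrow> nat \<Rightarrow> nat \<Rightarrow> bool" where
  "realizes \<alpha> M N \<longleftrightarrow> (\<exists>c. has_portrait (f2 c) (reduce_at \<alpha> c) M N)"

end

theory Submission
  imports Defs
begin

text \<open>Write \<open>\<alpha> = a / b\<close> in lowest terms. Reduction modulo \<open>t = c\<close> commutes with
  \<open>z \<mapsto> z\<^sup>2 + t\<close>, and a point has portrait \<open>(M + 1, 1)\<close> iff its \<open>M\<close>-th image has
  portrait \<open>(1, 1)\<close>; for \<open>z\<^sup>2 + c\<close> these are the roots \<open>w \<noteq> 0\<close> of \<open>w\<^sup>2 + w + c\<close>. Hence
  \<open>\<alpha>\<close> realizes \<open>(1, 1)\<close> iff the quadratic form \<open>N(a, b) = a\<^sup>2 + a b + t b\<^sup>2\<close> has a root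
  \<open>c\<close> with \<open>a(c) \<noteq> 0\<close>, so \<open>\<alpha>\<close> fails exactly when \<open>a(0) = 0\<close> and \<open>N(a, b) = k t\<^sup>n\<close>.
  The form satisfies \<open>N(\<phi>\<^sub>1(a, b)) = t\<^sup>2 N(a, b)\<close> for the linear action of \<open>\<phi>\<^sub>1\<close> on
  homogeneous coordinates, and every failing pair with \<open>n \<ge> 2\<close> has a \<open>\<phi>\<^sub>1\<close>-preimage of the
  same kind with \<open>n - 2\<close>; descending to \<open>n \<le> 1\<close> or to \<open>q = 0\<close> lands at \<open>0\<close> or \<open>\<infinity>\<close>.
  The portrait \<open>(0, 1)\<close> is always realized by a root of \<open>N(-a, b)\<close>, and \<open>(M, 1)\<close> with
  \<open>M \<ge> 2\<close> always is, because for \<open>\<gamma>\<^sup>2 + t\<close> the form has a nonzero root. The heights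
  follow from \<open>deg N(a, b) = max (2 deg a) (2 deg b + 1)\<close>.\<close>


section \<open>Lowest terms in \<open>K(t)\<close>\<close>

lemma fract_coprime_rep:
  fixes x :: "'a::field ratfun"
  obtains a b where "b \<noteq> 0" "x = Fract a b" "coprime a b"
proof -
  let ?rep = "\<lambda>n. \<exists>a b. b \<noteq> 0 \<and> x = Fract a b \<and> degree b = n"
  obtain a0 b0 where "x = Fract a0 b0" "b0 \<noteq> 0" by (cases x)
  then obtain n where "?rep n" and minimal: "\<And>m. m < n \<Longrightarrow> \<not> ?rep m"
    using exists_least_iff[of ?rep] by blast
  then obtain a b where ab: "b \<noteq> 0" "x = Fract a b" "degree b = n" by blast
  have "coprime a b"
  proof (rule coprimeI)
    fix d assume "d dvd a" "d dvd b"
    then obtain a' b' where a': "a = d * a'" and b': "b = d * b'" by (auto elim!: dvdE)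
    with ab have "d \<noteq> 0" "b' \<noteq> 0" by auto
    with ab a' b' have "?rep (degree b')" by (auto simp: mult_fract_cancel)
    moreover have "degree b = degree d + degree b'"
      using b' \<open>d \<noteq> 0\<close> \<open>b' \<noteq> 0\<close> by (simp add: degree_mult_eq)
    ultimately have "degree d = 0" using minimal ab(3) by (metis add_0 not_gr_zero less_add_same_cancel2)
    with \<open>d \<noteq> 0\<close> show "is_unit d" by (simp add: is_unit_iff_degree)
  qed
  with ab that show thesis by blast
qed

text \<open>Elements \<open>u a + v b\<close> of least degree divide both \<open>a\<close> and \<open>b\<close>.\<close>
lemma coprime_poly_bezout:
  fixes a b :: "'a::field poly"
  assumes "coprime a b"
  obtains u v where "u * a + v * b = 1"
proof -
  let ?comb = "\<lambda>n. \<exists>u v. u * a + v * b \<noteq> 0 \<and> degree (u * a + v * b) = n"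
  have "a \<noteq> 0 \<or> b \<noteq> 0"
    using assms by auto
  then have "?comb (degree a) \<or> ?comb (degree b)"
    by (metis add.right_neutral add_0 mult_1 mult_zero_left)
  then obtain n where "?comb n" and minimal: "\<And>m. m < n \<Longrightarrow> \<not> ?comb m"
    using exists_least_iff[of ?comb] by blast
  then obtain u v where d0: "u * a + v * b \<noteq> 0" and deg: "degree (u * a + v * b) = n" by blast
  define d where "d = u * a + v * b"
  have "d dvd x" if "x = a \<or> x = b" for x
  proof (rule ccontr)
    assume "\<not> d dvd x"
    then have "x mod d \<noteq> 0" by (simp add: dvd_eq_mod_eq_0)
    define U V where "U = (if x = a then 1 else 0) - x div d * u"
      and "V = (if x = a then 0 else 1) - x div d * v"
    have "x mod d = U * a + V * b"
      using that unfolding U_def V_def d_def minus_div_mult_eq_mod[symmetric]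
      by (auto simp: algebra_simps)
    with \<open>x mod d \<noteq> 0\<close> have "?comb (degree (x mod d))"
      by (metis (mono_tags))
    moreover have "degree (x mod d) < n"
      using degree_mod_less'[of d x] d0 deg \<open>x mod d \<noteq> 0\<close> by (simp add: d_def)
    ultimately show False using minimal by blast
  qed
  with assms have "is_unit d" by (simp add: coprime_common_divisor)
  then obtain c where c: "c \<noteq> 0" "d = [:c:]"
    using is_unit_poly_iff[of d] by fastforce
  have "smult (inverse c) u * a + smult (inverse c) v * b = smult (inverse c) d"
    by (simp add: d_def smult_add_right)
  also have "\<dots> = 1"
    using c by (simp add: one_pCons)
  finally show thesis by (rule that)
qed

lemma coprime_poly_dvd_mult_cancel:
  fixes a b c :: "'a::field poly"
  assumes "coprime a b" "b dvd a * c"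
  shows "b dvd c"
proof -
  obtain u v where "u * a + v * b = 1" using assms(1) by (rule coprime_poly_bezout)
  then have "c = (u * a + v * b) * c"
    by simp
  also have "\<dots> = u * (a * c) + b * (v * c)"
    by (simp add: algebra_simps)
  also have "b dvd \<dots>"
    using assms(2) by simp
  finally show ?thesis .
qed

lemma Fract_coprime_unique:
  fixes a b c d :: "'a::field poly"
  assumes "b \<noteq> 0" "d \<noteq> 0" "coprime a b" "coprime c d" "Fract a b = Fract c d"
  obtains u where "u \<noteq> 0" "c = smult u a" "d = smult u b"
proof -
  have eq: "a * d = c * b" using assms(1,2,5) by (simp add: eq_fract)
  then have "b dvd d" "d dvd b"
    using assms(3,4) coprime_poly_dvd_mult_cancel by (metis dvd_triv_right)+
  then obtain w where w: "d = b * w" and "is_unit w"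
    using assms(1) by (metis dvd_def dvd_times_left_cancel_iff mult_1_right)
  then obtain u where u: "u \<noteq> 0" "w = [:u:]"
    using is_unit_poly_iff[of w] by fastforce
  from eq w assms(1) have "c = a * w" by (simp add: mult.commute mult.left_commute)
  with u w that show thesis by (simp add: mult.commute)
qed

lemma rnum_rden:
  fixes x :: "'a::field ratfun"
  shows "x = Fract (rnum x) (rden x)" "lead_coeff (rden x) = 1" "coprime (rnum x) (rden x)"
proof -
  let ?normal = "\<lambda>(p, q). x = Fract p q \<and> lead_coeff q = 1 \<and> coprime p q"
  obtain a b where ab: "b \<noteq> 0" "x = Fract a b" "coprime a b"
    by (rule fract_coprime_rep)
  define u where "u = inverse (lead_coeff b)"
  have "u \<noteq> 0" "lead_coeff (smult u b) = 1"
    using ab(1) by (simp_all add: u_def)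
  moreover have "x = Fract (smult u a) (smult u b)"
    using ab \<open>u \<noteq> 0\<close> mult_fract_cancel[of "[:u:]" a b] by simp
  moreover have "coprime (smult u a) (smult u b)"
    using ab(3) \<open>u \<noteq> 0\<close> by (simp add: coprime_def dvd_smult_cancel)
  ultimately have "?normal (smult u a, smult u b)" by simp
  then have "?normal (rnumden x)"
    unfolding rnumden_def by (rule someI)
  then show "x = Fract (rnum x) (rden x)" "lead_coeff (rden x) = 1" "coprime (rnum x) (rden x)"
    unfolding rnum_def rden_def by (simp_all add: case_prod_beta)
qed

lemma rnum_rden_Fract:
  fixes a b :: "'a::field poly"
  assumes "b \<noteq> 0" "coprime a b"
  obtains u where "u \<noteq> 0" "rnum (Fract a b) = smult u a" "rden (Fract a b) = smult u b"
proof -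
  have "rden (Fract a b) \<noteq> 0"
    using rnum_rden(2)[of "Fract a b"] by auto
  with assms rnum_rden[of "Fract a b"] show thesis
    using Fract_coprime_unique that by metis
qed

lemma reduce_at_Fract:
  fixes a b :: "'a::field poly"
  assumes "b \<noteq> 0" "coprime a b"
  shows "reduce_at (Fract a b) c = (if poly b c = 0 then None else Some (poly a c / poly b c))"
  using assms by (rule rnum_rden_Fract) (simp add: reduce_at_def)

lemma height_Fract:
  fixes a b :: "'a::field poly"
  assumes "b \<noteq> 0" "coprime a b"
  shows "height (Some (Fract a b)) = max (degree a) (degree b)"
  using assms by (rule rnum_rden_Fract) (simp add: height_def)

lemma coprime_iff_no_common_root:
  fixes p q :: "'a::alg_closed_field poly"
  shows "coprime p q \<longleftrightarrow> (\<forall>c. poly p c \<noteq> 0 \<or> poly q c \<noteq> 0)"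
proof
  assume "coprime p q"
  show "\<forall>c. poly p c \<noteq> 0 \<or> poly q c \<noteq> 0"
  proof (intro allI, rule ccontr)
    fix c assume "\<not> (poly p c \<noteq> 0 \<or> poly q c \<noteq> 0)"
    then have "[:-c, 1:] dvd p" "[:-c, 1:] dvd q"
      by (simp_all add: poly_eq_0_iff_dvd)
    with \<open>coprime p q\<close> have "is_unit [:-c, 1:]"
      by (rule coprime_common_divisor)
    then show False by (simp add: is_unit_iff_degree)
  qed
next
  assume no_common_root: "\<forall>c. poly p c \<noteq> 0 \<or> poly q c \<noteq> 0"
  show "coprime p q"
  proof (rule coprimeI)
    fix d assume "d dvd p" "d dvd q"
    then have "poly d c \<noteq> 0" for c
      using no_common_root by (metis dvd_def mult_eq_0_iff poly_mult)
    then have "d \<noteq> 0" "degree d = 0"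
      using alg_closed_imp_poly_has_root by (auto intro: Nat.gr0I)
    then show "is_unit d"
      by (simp add: is_unit_iff_degree)
  qed
qed

lemma dvd_monom_imp_unit:
  fixes d :: "'a::field poly"
  assumes "d dvd monom k n" "k \<noteq> 0" "poly d 0 \<noteq> 0"
  shows "is_unit d"
proof -
  obtain e where e: "monom k n = d * e"
    using assms(1) by (rule dvdE)
  moreover have "monom k n \<noteq> 0"
    using assms(2) by (simp add: monom_eq_0_iff)
  ultimately have "e \<noteq> 0"
    by auto
  have "n = order 0 (d * e)"
    using assms(2) by (simp flip: e)
  also have "\<dots> = order 0 d + order 0 e"
    using \<open>monom k n \<noteq> 0\<close> e by (simp add: order_mult)
  finally have "n = order 0 d + order 0 e" .
  moreover have "order 0 d = 0"
    using assms(3) by (rule order_0I)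
  ultimately obtain f where f: "e = monom 1 n * f"
    using monom_1_dvd_iff[of e n] \<open>e \<noteq> 0\<close> by (auto elim: dvdE)
  have "monom 1 n * [:k:] = monom 1 n * (d * f)"
    using e by (simp add: f monom_altdef algebra_simps)
  then have "[:k:] = d * f"
    by (subst (asm) mult_left_cancel) (simp_all add: monom_eq_0_iff)
  then have "d dvd [:k:]"
    by (metis dvd_triv_left)
  with assms(2) show ?thesis
    using is_unit_const_poly_iff[of k] dvd_trans by (auto simp: dvd_field_iff)
qed

lemma poly_roots_only_0_eq_monom:
  fixes p :: "'a::alg_closed_field poly"
  assumes "p \<noteq> 0" "\<And>c. poly p c = 0 \<Longrightarrow> c = 0"
  obtains k n where "k \<noteq> 0" "p = monom k n"
proof -
  obtain q where q: "p = [:0, 1:] ^ order 0 p * q" and "\<not> [:0, 1:] dvd q"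
    using order_decomp[OF assms(1), of 0] by auto
  have "poly q c \<noteq> 0" for c
  proof (cases "c = 0")
    case True
    with \<open>\<not> [:0, 1:] dvd q\<close> show ?thesis
      by (simp add: poly_eq_0_iff_dvd)
  next
    case False
    with assms(2) have "poly p c \<noteq> 0" by blast
    with q show ?thesis by (metis mult_zero_right poly_mult)
  qed
  then have "degree q = 0"
    using alg_closed_imp_poly_has_root by blast
  then obtain k where "q = [:k:]"
    by (metis degree_0_id)
  with q assms(1) have "k \<noteq> 0" "p = monom k (order 0 p)"
    by (auto simp: monom_altdef)
  then show thesis
    by (rule that)
qed

section \<open>Preperiodic portraits\<close>

lemma is_periodic_funpow:
  assumes "is_periodic f y"
  shows "is_periodic f ((f ^^ k) y)"
proof -
  obtain n where "n > 0" "(f ^^ n) y = y"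
    using assms unfolding is_periodic_def by blast
  then have "(f ^^ n) ((f ^^ k) y) = (f ^^ k) y"
    by (metis comp_apply funpow_add add.commute)
  with \<open>n > 0\<close> show ?thesis
    unfolding is_periodic_def by blast
qed

lemma has_portrait_funpow_iff:
  assumes "0 < M"
  shows "has_portrait f ((f ^^ m) x) M N \<longleftrightarrow> has_portrait f x (m + M) N"
proof -
  let ?per = "\<lambda>j. is_periodic f ((f ^^ j) x)"
  have iter: "(f ^^ j) ((f ^^ m) x) = (f ^^ (m + j)) x" for j
    by (simp add: funpow_add add.commute)
  have "(\<forall>j<M. \<not> ?per (m + j)) \<longleftrightarrow> (\<forall>j<m + M. \<not> ?per j)"
  proof
    assume nonper: "\<forall>j<M. \<not> ?per (m + j)"
    show "\<forall>j<m + M. \<not> ?per j"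
    proof (intro allI impI notI)
      fix j assume "j < m + M" "?per j"
      then have "is_periodic f ((f ^^ (m + (M - 1) - j)) ((f ^^ j) x))"
        by (simp add: is_periodic_funpow)
      moreover have "m + (M - 1) - j + j = m + (M - 1)"
        using \<open>j < m + M\<close> by simp
      ultimately have "?per (m + (M - 1))"
        by (metis comp_apply funpow_add)
      moreover have "M - 1 < M"
        using assms by simp
      ultimately show False
        using nonper by blast
    qed
  qed auto
  then show ?thesis
    unfolding has_portrait_def iter by simp
qed

lemma has_portrait_fixed_point:
  assumes "f y = y"
  shows "has_portrait f y 0 1"
  using assms unfolding has_portrait_def is_periodic_def exact_period_def by auto

lemma has_portrait_1_1_iff:
  "has_portrait f x 1 1 \<longleftrightarrow> f (f x) = f x \<and> f x \<noteq> x"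
proof
  assume portrait: "has_portrait f x 1 1"
  then have nonper: "\<not> is_periodic f x"
    unfolding has_portrait_def by (metis funpow_0 zero_less_one)
  have "f x \<noteq> x"
  proof
    assume "f x = x"
    then have "is_periodic f x"
      unfolding is_periodic_def by (intro exI[of _ 1]) simp
    with nonper show False ..
  qed
  moreover have "f (f x) = f x"
    using portrait by (simp add: has_portrait_def exact_period_def)
  ultimately show "f (f x) = f x \<and> f x \<noteq> x" by simp
next
  assume fixed: "f (f x) = f x \<and> f x \<noteq> x"
  then have "(f ^^ Suc n) x = f x" for n
    by (induction n) auto
  with fixed have "\<not> is_periodic f x"
    unfolding is_periodic_def by (metis gr0_implies_Suc)
  with fixed show "has_portrait f x 1 1"
    unfolding has_portrait_def is_periodic_def exact_period_def by auto
qed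

text \<open>Such a point maps to its negative, which is fixed.\<close>
lemma f2_portrait_1_1_iff:
  fixes c :: "'a::field_char_0"
  shows "has_portrait (f2 c) x 1 1 \<longleftrightarrow> (\<exists>w. x = Some w \<and> w\<^sup>2 + w + c = 0 \<and> w \<noteq> 0)"
proof (cases x)
  case None
  then show ?thesis unfolding has_portrait_1_1_iff by (simp add: f2_def)
next
  case (Some w)
  have factor: "((w\<^sup>2 + c)\<^sup>2 + c) - (w\<^sup>2 + c) = (w\<^sup>2 - w + c) * (w\<^sup>2 + w + c)"
    by (simp add: algebra_simps power2_eq_square)
  have "(w\<^sup>2 + c)\<^sup>2 + c = w\<^sup>2 + c \<and> w\<^sup>2 + c \<noteq> w \<longleftrightarrow> w\<^sup>2 + w + c = 0 \<and> w \<noteq> 0"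
  proof
    assume fixed: "(w\<^sup>2 + c)\<^sup>2 + c = w\<^sup>2 + c \<and> w\<^sup>2 + c \<noteq> w"
    with factor have "(w\<^sup>2 - w + c) * (w\<^sup>2 + w + c) = 0"
      by simp
    moreover have "w\<^sup>2 - w + c \<noteq> 0"
      using fixed by (simp add: algebra_simps)
    ultimately have "w\<^sup>2 + w + c = 0"
      by simp
    with fixed show "w\<^sup>2 + w + c = 0 \<and> w \<noteq> 0"
      by auto
  next
    assume root: "w\<^sup>2 + w + c = 0 \<and> w \<noteq> 0"
    then have "w\<^sup>2 + c = - w"
      by (simp add: algebra_simps add_eq_0_iff2)
    with root factor show "(w\<^sup>2 + c)\<^sup>2 + c = w\<^sup>2 + c \<and> w\<^sup>2 + c \<noteq> w"
      by auto
  qed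
  with Some show ?thesis
    unfolding has_portrait_1_1_iff by (simp add: f2_def)
qed

lemma orbit_closed:
  assumes "x \<in> orbit f y"
  shows "f x \<in> orbit f y"
proof -
  obtain k where "x = (f ^^ k) y"
    using assms unfolding orbit_def by blast
  then have "f x = (f ^^ Suc k) y"
    by simp
  then show ?thesis
    unfolding orbit_def by blast
qed

lemma start_mem_orbit: "y \<in> orbit f y"
  unfolding orbit_def by (rule CollectI, rule exI[of _ 0]) simp

section \<open>Reduction and the quadratic form\<close>

lemma square_plus_tvar_Fract:
  fixes a b :: "'a::alg_closed_field poly"
  assumes "b \<noteq> 0" "coprime a b"
  shows "Fract a b ^ 2 + tvar = Fract (a\<^sup>2 + [:0, 1:] * b\<^sup>2) (b\<^sup>2)"
    and "coprime (a\<^sup>2 + [:0, 1:] * b\<^sup>2) (b\<^sup>2)"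
proof -
  show "Fract a b ^ 2 + tvar = Fract (a\<^sup>2 + [:0, 1:] * b\<^sup>2) (b\<^sup>2)"
    using assms(1) by (simp add: tvar_def power2_eq_square algebra_simps)
  have "poly (a\<^sup>2 + [:0, 1:] * b\<^sup>2) c \<noteq> 0" if "poly b c = 0" for c
    using assms(2) that by (auto simp: coprime_iff_no_common_root)
  then show "coprime (a\<^sup>2 + [:0, 1:] * b\<^sup>2) (b\<^sup>2)"
    by (auto simp: coprime_iff_no_common_root)
qed

lemma reduce_at_square_plus_tvar:
  fixes \<alpha> :: "'a::alg_closed_field ratfun"
  shows "reduce_at (\<alpha>\<^sup>2 + tvar) c = f2 c (reduce_at \<alpha> c)"
proof -
  obtain a b where ab: "b \<noteq> 0" "\<alpha> = Fract a b" "coprime a b"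
    by (rule fract_coprime_rep)
  show ?thesis
    using ab square_plus_tvar_Fract[OF ab(1,3)]
    by (simp add: reduce_at_Fract f2_def power_divide field_simps)
qed

lemma realizes_Suc_iff:
  fixes \<alpha> :: "'a::alg_closed_field ratfun"
  shows "realizes \<alpha> (Suc n) N \<longleftrightarrow> realizes (((\<lambda>z. z\<^sup>2 + tvar) ^^ n) \<alpha>) 1 N"
proof -
  have "reduce_at (((\<lambda>z. z\<^sup>2 + tvar) ^^ n) \<alpha>) c = (f2 c ^^ n) (reduce_at \<alpha> c)" for c
    by (induction n) (simp_all add: reduce_at_square_plus_tvar)
  then show ?thesis
    unfolding realizes_def by (simp add: has_portrait_funpow_iff)
qed

text \<open>The homogenisation \<open>q\<^sup>2 (z\<^sup>2 + z + t)\<close> at \<open>z = p / q\<close>: the fraction \<open>p / q\<close>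
  reduces at \<open>t = c\<close> to a point of portrait \<open>(1, 1)\<close> for \<open>z\<^sup>2 + c\<close> exactly when \<open>c\<close> is a
  root of it at which \<open>p\<close> does not vanish.\<close>
fun homog_quad :: "'a::comm_ring_1 poly \<times> 'a poly \<Rightarrow> 'a poly" where
  "homog_quad (p, q) = p\<^sup>2 + p * q + [:0, 1:] * q\<^sup>2"

declare homog_quad.simps [simp del]

lemma poly_homog_quad [simp]:
  "poly (homog_quad (p, q)) c = (poly p c)\<^sup>2 + poly p c * poly q c + c * (poly q c)\<^sup>2"
  by (simp add: homog_quad.simps)

lemma poly_homog_quad_eq:
  fixes p q :: "'a::field poly"
  assumes "poly q c \<noteq> 0"
  shows "poly (homog_quad (p, q)) c
           = (poly q c)\<^sup>2 * ((poly p c / poly q c)\<^sup>2 + poly p c / poly q c + c)"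
  using assms by (simp add: field_simps power2_eq_square)

lemma degree_homog_quad:
  fixes p q :: "'a::idom poly"
  assumes "q \<noteq> 0"
  shows "degree (homog_quad (p, q)) = max (2 * degree p) (2 * degree q + 1)"
proof -
  have deg_tq: "degree ([:0, 1:] * q\<^sup>2) = 2 * degree q + 1"
    using assms by (simp add: degree_mult_eq degree_power_eq)
  have deg_p: "degree (p\<^sup>2) = 2 * degree p"
    by (cases "p = 0") (simp_all add: degree_power_eq)
  have "degree (p * q) \<le> degree p + degree q"
    by (rule degree_mult_le)
  then have mixed: "degree (p * q) < max (2 * degree p) (2 * degree q + 1)"
    by linarith
  have "degree (p\<^sup>2 + [:0, 1:] * q\<^sup>2) = max (2 * degree p) (2 * degree q + 1)"
  proof (cases "degree p \<le> degree q")
    case True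
    then show ?thesis using deg_tq deg_p by (simp add: degree_add_eq_right)
  next
    case False
    then show ?thesis using deg_tq deg_p by (simp add: degree_add_eq_left)
  qed
  with mixed have "degree (p\<^sup>2 + [:0, 1:] * q\<^sup>2 + p * q) = max (2 * degree p) (2 * degree q + 1)"
    by (simp add: degree_add_eq_left)
  then show ?thesis
    by (simp add: homog_quad.simps add.commute add.left_commute)
qed

lemma realizes_0_1:
  fixes \<alpha> :: "'a::alg_closed_field ratfun"
  shows "realizes \<alpha> 0 1"
proof -
  obtain a b where ab: "b \<noteq> 0" "\<alpha> = Fract a b" "coprime a b"
    by (rule fract_coprime_rep)
  have "degree (homog_quad (- a, b)) > 0"
    using degree_homog_quad[OF ab(1), of "- a"] by simp
  then obtain c where root: "poly (homog_quad (- a, b)) c = 0"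
    using alg_closed_imp_poly_has_root by blast
  have "poly b c \<noteq> 0"
  proof
    assume "poly b c = 0"
    with root have "poly a c = 0" by simp
    with \<open>poly b c = 0\<close> ab(3) show False
      by (auto simp: coprime_iff_no_common_root)
  qed
  define z where "z = poly a c / poly b c"
  have "(poly b c)\<^sup>2 * (z\<^sup>2 - z + c) = 0"
    using root poly_homog_quad_eq[OF \<open>poly b c \<noteq> 0\<close>, of "- a"] by (simp add: z_def)
  with \<open>poly b c \<noteq> 0\<close> have "z\<^sup>2 - z + c = 0"
    by simp
  then have "z\<^sup>2 + c = z"
    by (simp add: algebra_simps)
  then have "has_portrait (f2 c) (reduce_at \<alpha> c) 0 1"
    using ab \<open>poly b c \<noteq> 0\<close>
    by (intro has_portrait_fixed_point) (simp add: reduce_at_Fract f2_def z_def)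
  then show ?thesis
    unfolding realizes_def by blast
qed

lemma realizes_1_1_iff:
  fixes a b :: "'a::{alg_closed_field, field_char_0} poly"
  assumes "b \<noteq> 0" "coprime a b"
  shows "realizes (Fract a b) 1 1 \<longleftrightarrow> (\<exists>c. poly (homog_quad (a, b)) c = 0 \<and> poly a c \<noteq> 0)"
proof -
  have "has_portrait (f2 c) (reduce_at (Fract a b) c) 1 1
          \<longleftrightarrow> poly (homog_quad (a, b)) c = 0 \<and> poly a c \<noteq> 0" for c
  proof (cases "poly b c = 0")
    case True
    then show ?thesis
      using assms unfolding f2_portrait_1_1_iff by (simp add: reduce_at_Fract)
  next
    case False
    then show ?thesis
      using assms poly_homog_quad_eq[OF False, of a]
      unfolding f2_portrait_1_1_iff by (simp add: reduce_at_Fract del: poly_homog_quad)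
  qed
  then show ?thesis
    unfolding realizes_def by blast
qed

lemma not_realizes_1_1_iff:
  fixes a b :: "'a::{alg_closed_field, field_char_0} poly"
  assumes "b \<noteq> 0" "coprime a b"
  shows "\<not> realizes (Fract a b) 1 1 \<longleftrightarrow>
           poly a 0 = 0 \<and> (\<exists>k n. k \<noteq> 0 \<and> homog_quad (a, b) = monom k n)"
proof
  assume "\<not> realizes (Fract a b) 1 1"
  then have roots: "poly a c = 0" if "poly (homog_quad (a, b)) c = 0" for c
    using that realizes_1_1_iff[OF assms] by blast
  have only_0: "c = 0" if "poly (homog_quad (a, b)) c = 0" for c
  proof -
    have "poly b c \<noteq> 0"
      using roots[OF that] assms(2) by (auto simp: coprime_iff_no_common_root)
    with that roots[OF that] show "c = 0" by simp
  qed
  have "degree (homog_quad (a, b)) > 0"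
    using degree_homog_quad[OF assms(1), of a] by simp
  moreover from this obtain c where "poly (homog_quad (a, b)) c = 0"
    using alg_closed_imp_poly_has_root by blast
  ultimately show "poly a 0 = 0 \<and> (\<exists>k n. k \<noteq> 0 \<and> homog_quad (a, b) = monom k n)"
    using roots only_0 poly_roots_only_0_eq_monom[of "homog_quad (a, b)"]
    by (metis degree_0 less_irrefl)
next
  assume "poly a 0 = 0 \<and> (\<exists>k n. k \<noteq> 0 \<and> homog_quad (a, b) = monom k n)"
  then show "\<not> realizes (Fract a b) 1 1"
    unfolding realizes_1_1_iff[OF assms] by (auto simp: poly_monom simp del: poly_homog_quad)
qed

text \<open>If \<open>\<gamma> = a / b\<close> and \<open>\<gamma>\<^sup>2 + t\<close> failed, its numerator would vanish at \<open>0\<close>, forcing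
  \<open>a(0) = 0\<close>; after removing the factor \<open>t\<close>, the quadratic form becomes \<open>t R\<close> with
  \<open>R(0) = 2 b(0)\<^sup>4 \<noteq> 0\<close>, so \<open>R\<close> has a nonzero root.\<close>
lemma realizes_square_plus_tvar_1_1:
  fixes \<gamma> :: "'a::{alg_closed_field, field_char_0} ratfun"
  shows "realizes (\<gamma>\<^sup>2 + tvar) 1 1"
proof (rule ccontr)
  obtain a b where ab: "b \<noteq> 0" "\<gamma> = Fract a b" "coprime a b"
    by (rule fract_coprime_rep)
  define A B where "A = a\<^sup>2 + [:0, 1:] * b\<^sup>2" and "B = b\<^sup>2"
  have "B \<noteq> 0" "coprime A B" "\<gamma>\<^sup>2 + tvar = Fract A B"
    using ab square_plus_tvar_Fract[OF ab(1,3)] by (simp_all add: A_def B_def)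
  moreover assume "\<not> realizes (\<gamma>\<^sup>2 + tvar) 1 1"
  ultimately obtain k n where A0: "poly A 0 = 0" and "k \<noteq> 0"
    and monom: "homog_quad (A, B) = monom k n"
    using not_realizes_1_1_iff by metis
  then have "poly a 0 = 0"
    by (simp add: A_def)
  then have b0: "poly b 0 \<noteq> 0"
    using ab(3) by (auto simp: coprime_iff_no_common_root)
  obtain a1 where a1: "a = [:0, 1:] * a1"
    using \<open>poly a 0 = 0\<close> by (metis dvdE minus_zero poly_eq_0_iff_dvd)
  define A1 R where "A1 = [:0, 1:] * a1\<^sup>2 + b\<^sup>2" and "R = [:0, 1:] * A1\<^sup>2 + A1 * B + B\<^sup>2"
  have A: "A = [:0, 1:] * A1"
    by (simp add: A_def A1_def a1 algebra_simps power2_eq_square)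
  have homog: "homog_quad (A, B) = [:0, 1:] * R"
    by (simp add: homog_quad.simps A R_def algebra_simps power2_eq_square)
  have "poly R 0 = 2 * (poly b 0)^4"
    by (simp add: R_def A1_def B_def power2_eq_square algebra_simps numeral_eq_Suc)
  with b0 have R0: "poly R 0 \<noteq> 0"
    by simp
  have "poly A1 0 \<noteq> 0"
    using b0 by (simp add: A1_def)
  with A have "A \<noteq> 0"
    by auto
  with A0 have "degree A > 0"
    by (metis degree_0_id gr0I pCons_0_0 poly_0_coeff_0)
  then have "degree (homog_quad (A, B)) \<ge> 2"
    using degree_homog_quad[OF \<open>B \<noteq> 0\<close>, of A] by simp
  with homog R0 have "degree R > 0"
    by (auto split: if_splits)
  then obtain c where "poly R c = 0"
    using alg_closed_imp_poly_has_root by blast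
  with R0 have "c \<noteq> 0" "poly (homog_quad (A, B)) c = 0"
    by (auto simp: homog simp del: poly_homog_quad)
  with monom \<open>k \<noteq> 0\<close> show False
    by (simp add: poly_monom del: poly_homog_quad)
qed

lemma realizes_Suc_Suc:
  fixes \<alpha> :: "'a::{alg_closed_field, field_char_0} ratfun"
  shows "realizes \<alpha> (Suc (Suc n)) 1"
  unfolding realizes_Suc_iff funpow.simps(2) comp_apply by (rule realizes_square_plus_tvar_1_1)

section \<open>The orbits of \<open>0\<close> and \<open>\<infinity>\<close> under \<open>\<phi>\<^sub>1\<close>\<close>

fun phi1_lift :: "'a::comm_ring_1 poly \<times> 'a poly \<Rightarrow> 'a poly \<times> 'a poly" where
  "phi1_lift (p, q) = (- [:0, 1:] * (p + q), p - [:-1, 1:] * q)"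

fun proj_point :: "'a::field poly \<times> 'a poly \<Rightarrow> 'a ratfun option" where
  "proj_point (p, q) = (if q = 0 then None else Some (Fract p q))"

lemma homog_quad_phi1_lift: "homog_quad (phi1_lift pq) = monom 1 2 * homog_quad pq"
  by (cases pq) (simp add: homog_quad.simps monom_altdef algebra_simps power2_eq_square)

lemma homog_quad_funpow_phi1_lift:
  "homog_quad ((phi1_lift ^^ k) pq) = monom 1 (2 * k) * homog_quad pq"
  by (induction k) (simp_all add: homog_quad_phi1_lift mult_monom mult.assoc[symmetric])

lemma phi1_proj_point:
  fixes p q :: "'a::field poly"
  assumes "(p, q) \<noteq> (0, 0)"
  shows "phi1 (proj_point (p, q)) = proj_point (phi1_lift (p, q))"
proof -
  have minus_tvar: "- tvar = Fract (- [:0, 1:]) (1 :: 'a poly)"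
    by (simp add: tvar_def)
  have tvar_minus_1: "tvar - 1 = Fract [:-1, 1:] (1 :: 'a poly)"
    by (simp add: tvar_def One_fract_def one_pCons)
  consider "q = 0" | "q \<noteq> 0" "p - [:-1, 1:] * q = 0" | "q \<noteq> 0" "p - [:-1, 1:] * q \<noteq> 0"
    by blast
  then show ?thesis
  proof cases
    case 1
    with assms have "p \<noteq> 0" by simp
    with 1 show ?thesis
      by (simp add: phi1_def minus_tvar eq_fract)
  next
    case 2
    then have "Fract p q = tvar - 1"
      by (simp add: tvar_minus_1 eq_fract)
    with 2 show ?thesis
      by (simp add: phi1_def)
  next
    case 3
    then have "Fract p q \<noteq> tvar - 1"
      by (simp add: tvar_minus_1 eq_fract)
    have "- tvar * (Fract p q + 1) = Fract (- [:0, 1:] * (p + q)) q"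
      using 3 by (simp add: minus_tvar One_fract_def)
    moreover have "Fract p q - (tvar - 1) = Fract (p - [:-1, 1:] * q) q"
      using 3 by (simp add: tvar_minus_1)
    moreover have "Fract a q / Fract s q = Fract a s" for a s :: "'a poly"
      using 3 by (simp add: mult.commute[of a] mult_fract_cancel)
    ultimately have "- tvar * (Fract p q + 1) / (Fract p q - (tvar - 1))
                       = Fract (- [:0, 1:] * (p + q)) (p - [:-1, 1:] * q)"
      by (simp only:)
    with 3 \<open>Fract p q \<noteq> tvar - 1\<close> show ?thesis
      by (simp add: phi1_def)
  qed
qed

lemma phi1_funpow_proj_point:
  assumes "homog_quad pq \<noteq> 0"
  shows "(phi1 ^^ k) (proj_point pq) = proj_point ((phi1_lift ^^ k) pq)"
proof (induction k)
  case (Suc k)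
  have "homog_quad ((phi1_lift ^^ k) pq) \<noteq> 0"
    using assms by (simp add: homog_quad_funpow_phi1_lift monom_eq_0_iff)
  then have "(phi1_lift ^^ k) pq \<noteq> (0, 0)"
    by (auto simp: homog_quad.simps)
  with Suc show ?case
    by (metis funpow.simps(2) comp_apply phi1_proj_point prod.collapse)
qed simp

text \<open>The divisibilities needed to invert \<open>phi1_lift\<close>.\<close>
lemma homog_quad_monom_dvd:
  fixes p q :: "'a::field poly"
  assumes homog: "homog_quad (p, q) = monom k n" and "poly p 0 = 0" "poly q 0 \<noteq> 0" "2 \<le> n"
  obtains P E where "p = [:0, 1:] * P" "P + q = [:0, 1:] * E"
proof -
  obtain P where P: "p = [:0, 1:] * P"
    using \<open>poly p 0 = 0\<close> by (metis dvdE minus_zero poly_eq_0_iff_dvd)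
  have "monom k n = [:0, 1:] * monom k (n - 1)"
    using \<open>2 \<le> n\<close> by (simp add: monom_altdef power_eq_if)
  with homog have "[:0, 1:] * ([:0, 1:] * P\<^sup>2 + P * q + q\<^sup>2) = [:0, 1:] * monom k (n - 1)"
    by (simp add: homog_quad.simps P algebra_simps power2_eq_square)
  then have "[:0, 1:] * P\<^sup>2 + P * q + q\<^sup>2 = monom k (n - 1)"
    by simp
  from arg_cong[where f = "\<lambda>r. poly r 0", OF this] \<open>2 \<le> n\<close>
  have "poly q 0 * poly (P + q) 0 = 0"
    by (simp add: poly_monom algebra_simps power2_eq_square)
  with \<open>poly q 0 \<noteq> 0\<close> obtain E where "P + q = [:0, 1:] * E"
    by (metis dvdE minus_zero mult_eq_0_iff poly_eq_0_iff_dvd)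
  with P that show thesis by blast
qed

lemma homog_quad_monom_descent:
  fixes p q :: "'a::field poly"
  assumes homog: "homog_quad (p, q) = monom k n" and "k \<noteq> 0" "poly p 0 = 0" "poly q 0 \<noteq> 0" "2 \<le> n"
  obtains p' q' where "phi1_lift (p', q') = (p, q)" "homog_quad (p', q') = monom k (n - 2)"
    "q' = 0 \<or> poly p' 0 = 0 \<and> poly q' 0 \<noteq> 0"
proof -
  obtain P E where P: "p = [:0, 1:] * P" and E: "P + q = [:0, 1:] * E"
    using homog \<open>poly p 0 = 0\<close> \<open>poly q 0 \<noteq> 0\<close> \<open>2 \<le> n\<close> by (rule homog_quad_monom_dvd)
  define p' q' where "p' = E - P" and "q' = - E"
  have lift: "phi1_lift (p', q') = (p, q)"
    using E by (simp add: p'_def q'_def P algebra_simps)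
  have "monom 1 2 * homog_quad (p', q') = monom 1 2 * monom k (n - 2)"
    using homog_quad_phi1_lift[of "(p', q')"] homog \<open>2 \<le> n\<close>
    by (simp add: lift mult_monom Suc_diff_Suc numeral_2_eq_2 del: phi1_lift.simps)
  then have homog': "homog_quad (p', q') = monom k (n - 2)"
    by (simp add: monom_eq_0_iff)
  have "q' = 0 \<or> poly p' 0 = 0 \<and> poly q' 0 \<noteq> 0"
  proof (cases "n = 2")
    case True
    then have "degree (homog_quad (p', q')) = 0"
      using homog' by (simp add: degree_monom_eq \<open>k \<noteq> 0\<close>)
    then show ?thesis
      using degree_homog_quad[of q' p'] by auto
  next
    case False
    have "poly p' 0 + poly q' 0 = poly q 0"
      using arg_cong[where f = "\<lambda>r. poly r 0", OF E]
      by (simp add: p'_def q'_def add_eq_0_iff)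
    moreover have "poly p' 0 * (poly p' 0 + poly q' 0) = 0"
      using arg_cong[where f = "\<lambda>r. poly r 0", OF homog'] False \<open>2 \<le> n\<close>
      by (simp add: poly_monom algebra_simps power2_eq_square)
    ultimately show ?thesis
      using \<open>poly q 0 \<noteq> 0\<close> by auto
  qed
  with lift homog' that show thesis by blast
qed

lemma proj_point_mem_phi1_orbits:
  fixes p q :: "'a::field poly"
  assumes "homog_quad (p, q) = monom k n" "k \<noteq> 0" "q = 0 \<or> poly p 0 = 0 \<and> poly q 0 \<noteq> 0"
  shows "proj_point (p, q) \<in> orbit phi1 (Some 0) \<union> orbit phi1 None"
  using assms
proof (induction n arbitrary: p q rule: less_induct)
  case (less n)
  consider "q = 0" | "poly p 0 = 0" "poly q 0 \<noteq> 0" "n < 2" | "poly p 0 = 0" "poly q 0 \<noteq> 0" "2 \<le> n"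
    using less.prems(3) by linarith
  then show ?case
  proof cases
    case 1
    then show ?thesis
      by (simp add: start_mem_orbit)
  next
    case 2
    have "n \<noteq> 0"
      using arg_cong[where f = "\<lambda>r. poly r 0", OF less.prems(1)] less.prems(2) 2
      by (auto simp: poly_monom)
    with 2 have "degree (homog_quad (p, q)) = 1"
      using less.prems(1,2) by (simp add: degree_monom_eq)
    moreover have "q \<noteq> 0"
      using 2 by auto
    ultimately have "degree p = 0"
      using degree_homog_quad[of q p] by simp
    with 2 have "p = 0"
      by (metis degree_0_id poly_0_coeff_0 pCons_0_0)
    with \<open>q \<noteq> 0\<close> have "proj_point (p, q) = Some 0"
      by (simp add: Zero_fract_def eq_fract)
    then show ?thesis
      by (simp add: start_mem_orbit)
  next
    case 3
    obtain p' q' where lift: "phi1_lift (p', q') = (p, q)"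
      and homog': "homog_quad (p', q') = monom k (n - 2)"
      and "q' = 0 \<or> poly p' 0 = 0 \<and> poly q' 0 \<noteq> 0"
      using less.prems(1,2) 3 by (rule homog_quad_monom_descent)
    with less.IH[of "n - 2"] 3 less.prems(2)
    have IH: "proj_point (p', q') \<in> orbit phi1 (Some 0) \<union> orbit phi1 None"
      by simp
    have "(p', q') \<noteq> (0, 0)"
      using homog' less.prems(2) by (auto simp: homog_quad.simps monom_eq_0_iff)
    then have "phi1 (proj_point (p', q')) = proj_point (p, q)"
      using phi1_proj_point[of p' q'] unfolding lift by simp
    with IH show ?thesis
      by (metis UnE UnI1 UnI2 orbit_closed)
  qed
qed

lemma coprime_if_homog_quad_eq_monom:
  fixes p q :: "'a::field poly"
  assumes "homog_quad (p, q) = monom k n" "k \<noteq> 0" "poly q 0 \<noteq> 0"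
  shows "coprime p q"
proof (rule coprimeI)
  fix d assume "d dvd p" "d dvd q"
  then have "d dvd monom k n"
    unfolding assms(1)[symmetric] homog_quad.simps power2_eq_square
    by (intro dvd_add; meson dvd_mult dvd_mult2)
  moreover have "poly d 0 \<noteq> 0"
    using \<open>d dvd q\<close> assms(3) by (auto elim!: dvdE)
  ultimately show "is_unit d"
    using assms(2) dvd_monom_imp_unit by blast
qed

lemma height_proj_point:
  fixes p q :: "'a::field poly"
  assumes "homog_quad (p, q) = monom k n" "k \<noteq> 0" "poly q 0 \<noteq> 0"
  shows "height (proj_point (p, q)) = n div 2"
proof -
  have "q \<noteq> 0"
    using assms(3) by auto
  have "max (2 * degree p) (2 * degree q + 1) = n"
    using degree_homog_quad[OF \<open>q \<noteq> 0\<close>, of p] assms(1,2) by (simp add: degree_monom_eq)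
  then have "max (degree p) (degree q) = n div 2"
    by linarith
  with \<open>q \<noteq> 0\<close> show ?thesis
    using height_Fract[OF \<open>q \<noteq> 0\<close> coprime_if_homog_quad_eq_monom[OF assms]] by simp
qed

lemma not_realizes_1_1_if_homog_quad_eq_monom:
  fixes p q :: "'a::{alg_closed_field, field_char_0} poly"
  assumes "homog_quad (p, q) = monom k n" "k \<noteq> 0" "poly p 0 = 0" "poly q 0 \<noteq> 0"
  shows "\<not> realizes (Fract p q) 1 1"
proof -
  have "q \<noteq> 0"
    using assms(4) by auto
  then show ?thesis
    unfolding not_realizes_1_1_iff[OF \<open>q \<noteq> 0\<close> coprime_if_homog_quad_eq_monom[OF assms(1,2,4)]]
    using assms(1-3) by blast
qed

lemma phi1_funpow_normal_form:
  fixes p q :: "'a::field poly"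
  assumes "homog_quad (p, q) = monom 1 n" "poly p 0 = 0" "poly q 0 \<noteq> 0"
  obtains p' q' where "(phi1 ^^ k) (proj_point (p, q)) = proj_point (p', q')"
    "homog_quad (p', q') = monom 1 (n + 2 * k)" "poly p' 0 = 0" "poly q' 0 \<noteq> 0"
proof -
  obtain p' q' where pq': "(phi1_lift ^^ k) (p, q) = (p', q')"
    by (metis prod.collapse)
  have lift_at_0: "poly (fst (phi1_lift pq)) 0 = 0"
    "poly (snd (phi1_lift pq)) 0 = poly (fst pq) 0 + poly (snd pq) 0" for pq :: "'a poly \<times> 'a poly"
    by (cases pq; simp)+
  have "poly (fst ((phi1_lift ^^ j) (p, q))) 0 = 0 \<and> poly (snd ((phi1_lift ^^ j) (p, q))) 0 = poly q 0"
    for j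
    using assms(2) by (induction j) (simp_all add: lift_at_0)
  then have "poly p' 0 = 0" "poly q' 0 \<noteq> 0"
    using pq' assms(3) by (metis fst_conv snd_conv)+
  moreover have "homog_quad (p', q') = monom 1 (n + 2 * k)"
    using homog_quad_funpow_phi1_lift[of k "(p, q)"] assms(1) by (simp add: pq' mult_monom add.commute)
  moreover have "(phi1 ^^ k) (proj_point (p, q)) = proj_point (p', q')"
    using phi1_funpow_proj_point[of "(p, q)" k] assms(1) by (simp add: pq' monom_eq_0_iff)
  ultimately show thesis
    using that by blast
qed

lemma phi1_funpow_0_normal_form:
  obtains p q where "(phi1 ^^ k) (Some (0 :: 'a::field ratfun)) = proj_point (p, q)"
    "homog_quad (p, q) = monom 1 (2 * k + 1)" "poly p 0 = 0" "poly q 0 \<noteq> 0"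
proof -
  have "homog_quad (0, 1 :: 'a poly) = monom 1 1" "poly (0 :: 'a poly) 0 = 0" "poly (1 :: 'a poly) 0 \<noteq> 0"
    by (simp_all add: homog_quad.simps monom_altdef)
  then obtain p q where "(phi1 ^^ k) (proj_point (0, 1 :: 'a poly)) = proj_point (p, q)"
    and "homog_quad (p, q) = monom 1 (1 + 2 * k)" "poly p 0 = 0" "poly q 0 \<noteq> 0"
    by (rule phi1_funpow_normal_form)
  moreover have "proj_point (0, 1) = Some (0 :: 'a ratfun)"
    by (simp add: Zero_fract_def)
  ultimately show thesis
    using that by (simp add: add.commute del: proj_point.simps)
qed

lemma phi1_funpow_None_normal_form:
  obtains p q where "(phi1 ^^ Suc k) (None :: 'a::field ratfun option) = proj_point (p, q)"
    "homog_quad (p, q) = monom 1 (2 * k + 2)" "poly p 0 = 0" "poly q 0 \<noteq> 0"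
proof -
  have "homog_quad (- [:0, 1:], 1 :: 'a poly) = monom 1 2"
    "poly (- [:0, 1:] :: 'a poly) 0 = 0" "poly (1 :: 'a poly) 0 \<noteq> 0"
    by (simp_all add: homog_quad.simps monom_altdef power2_eq_square)
  then obtain p q where "(phi1 ^^ k) (proj_point (- [:0, 1:], 1 :: 'a poly)) = proj_point (p, q)"
    and "homog_quad (p, q) = monom 1 (2 + 2 * k)" "poly p 0 = 0" "poly q 0 \<noteq> 0"
    by (rule phi1_funpow_normal_form)
  moreover have "phi1 None = proj_point (- [:0, 1:], 1 :: 'a poly)"
    by (simp add: phi1_def tvar_def)
  then have "(phi1 ^^ Suc k) None = (phi1 ^^ k) (proj_point (- [:0, 1:], 1 :: 'a poly))"
    by (simp only: funpow_Suc_right comp_apply)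
  ultimately show thesis
    using that by (simp add: add.commute del: proj_point.simps)
qed

lemma height_phi1_funpow_0: "height ((phi1 ^^ k) (Some (0 :: 'a::field ratfun))) = k"
proof -
  obtain p q :: "'a poly" where "(phi1 ^^ k) (Some 0) = proj_point (p, q)"
    and "homog_quad (p, q) = monom 1 (2 * k + 1)" "poly q 0 \<noteq> 0"
    by (rule phi1_funpow_0_normal_form)
  then show ?thesis
    using height_proj_point[of p q 1 "2 * k + 1"] by (simp del: proj_point.simps)
qed

lemma height_phi1_funpow_None: "height ((phi1 ^^ k) (None :: 'a::field ratfun option)) = k"
proof (cases k)
  case 0
  then show ?thesis
    by (simp add: height_def)
next
  case (Suc j)
  obtain p q :: "'a poly" where "(phi1 ^^ Suc j) None = proj_point (p, q)"
    and "homog_quad (p, q) = monom 1 (2 * j + 2)" "poly q 0 \<noteq> 0"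
    by (rule phi1_funpow_None_normal_form)
  with Suc show ?thesis
    using height_proj_point[of p q 1 "2 * j + 2"] by (simp del: proj_point.simps)
qed

lemma not_realizes_1_1_iff_phi1_orbits:
  fixes \<alpha> :: "'a::{alg_closed_field, field_char_0} ratfun"
  shows "\<not> realizes \<alpha> 1 1 \<longleftrightarrow> Some \<alpha> \<in> orbit phi1 (Some 0) \<union> orbit phi1 None"
proof
  obtain a b where ab: "b \<noteq> 0" "\<alpha> = Fract a b" "coprime a b"
    by (rule fract_coprime_rep)
  assume "\<not> realizes \<alpha> 1 1"
  then obtain k n where "poly a 0 = 0" "k \<noteq> 0" "homog_quad (a, b) = monom k n"
    using not_realizes_1_1_iff[OF ab(1,3)] ab(2) by blast
  moreover from this have "poly b 0 \<noteq> 0"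
    using ab(3) by (auto simp: coprime_iff_no_common_root)
  ultimately have "proj_point (a, b) \<in> orbit phi1 (Some 0) \<union> orbit phi1 None"
    by (intro proj_point_mem_phi1_orbits) auto
  with ab show "Some \<alpha> \<in> orbit phi1 (Some 0) \<union> orbit phi1 None"
    by simp
next
  assume "Some \<alpha> \<in> orbit phi1 (Some 0) \<union> orbit phi1 None"
  then have "\<exists>k. Some \<alpha> = (phi1 ^^ k) (Some 0) \<or> Some \<alpha> = (phi1 ^^ Suc k) None"
  proof
    assume "Some \<alpha> \<in> orbit phi1 (Some 0)"
    then show ?thesis
      unfolding orbit_def by blast
  next
    assume "Some \<alpha> \<in> orbit phi1 None"
    then obtain k where k: "Some \<alpha> = (phi1 ^^ k) None"
      unfolding orbit_def by blast
    then show ?thesis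
      by (cases k) auto
  qed
  then obtain p q :: "'a poly" and n where pq: "Some \<alpha> = proj_point (p, q)"
    and "homog_quad (p, q) = monom 1 n" "poly p 0 = 0" "poly q 0 \<noteq> 0"
    by (elim exE disjE) (metis phi1_funpow_0_normal_form, metis phi1_funpow_None_normal_form)
  moreover from pq \<open>poly q 0 \<noteq> 0\<close> have "\<alpha> = Fract p q"
    by (auto split: if_splits)
  ultimately show "\<not> realizes \<alpha> 1 1"
    using not_realizes_1_1_if_homog_quad_eq_monom[of p q 1 n] by simp
qed

theorem proposition5p18:
  fixes \<alpha> :: "'a::{alg_closed_field, field_char_0} ratfun" and M :: nat
  shows "(\<not> realizes \<alpha> M 1 \<longleftrightarrow>
            M = 1 \<and> Some \<alpha> \<in> orbit phi1 (Some 0) \<union> orbit phi1 None) \<and>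
         (\<forall>k. height ((phi1 ^^ k) (Some 0)) = k \<and> height ((phi1 ^^ k) None) = k)"
proof (intro conjI allI)
  show "\<not> realizes \<alpha> M 1 \<longleftrightarrow> M = 1 \<and> Some \<alpha> \<in> orbit phi1 (Some 0) \<union> orbit phi1 None"
  proof (cases M)
    case 0
    then show ?thesis
      using realizes_0_1[of \<alpha>] by simp
  next
    case (Suc m)
    then show ?thesis
      using not_realizes_1_1_iff_phi1_orbits[of \<alpha>] realizes_Suc_Suc[of \<alpha>]
      by (cases m) simp_all
  qed
qed (simp_all add: height_phi1_funpow_0 height_phi1_funpow_None)

end
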